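(* Let $0<q<1$. The kernel $K(\mu,n)=(q^{\mu};q)_n$ is strictly totally positive of order $3$ on $(0,\infty)\times\mathbb{N}_0$, i.e. for $m=1,2,3$, all reals $0<\mu_1<\dots<\mu_m$ and all integers $0\le n_1<\dots<n_m$, $\det\big((q^{\mu_i};q)_{n_j}\big)_{i,j=1}^m>0$.
   Context: $(a;q)_n=\prod_{j=0}^{n-1}(1-aq^j)$, with $(a;q)_0=1$. *)

theory Defs
  imports "HOL-Analysis.Analysis" "Jordan_Normal_Form.Determinant"
begin

definition qpoch :: "real \<Rightarrow> real \<Rightarrow> nat \<Rightarrow> real" where
  "qpoch a q n = (\<Prod>j<n. 1 - a * q ^ j)"

end

theory Submission
  imports Defs
begin

(* With x_i = q^mu_i we have 1 > x_0 > x_1 > x_2 > 0, and the kernel is (x_i;q)_k.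
   Since (x;q)_(a+c) = (x;q)_a (x q^a;q)_c and (x;q)_c is strictly decreasing in x < 1,
   all 2x2 minors are positive. By Fekete's argument, using the three-term Plucker
   relations and these positive 2x2 minors, the 3x3 minors are positive as soon as
   those on consecutive columns k, k+1, k+2 are; there, pulling out (x_i;q)_k leaves
   q^(3k+1) times the Vandermonde determinant of the x_i. *)

lemma det_mat_1: "det (mat 1 1 f) = f (0, 0)"
  by (subst det_single) auto

lemma det_mat_2: "det (mat 2 2 f) = f (0, 0) * f (1, 1) - f (0, 1) * f (1, 0)"
  by (subst laplace_expansion_column[of _ 2 0])
    (auto simp: cofactor_def mat_delete_def lessThan_Suc numeral_2_eq_2 det_single)

lemma det_mat_3:
  "det (mat 3 3 f) =
     f (0, 0) * (f (1, 1) * f (2, 2) - f (1, 2) * f (2, 1))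
   - f (1, 0) * (f (0, 1) * f (2, 2) - f (0, 2) * f (2, 1))
   + f (2, 0) * (f (0, 1) * f (1, 2) - f (0, 2) * f (1, 1))"
  by (subst laplace_expansion_column[of _ 3 0])
    (auto simp: cofactor_def mat_delete_def lessThan_Suc numeral_3_eq_3 numeral_2_eq_2
      det_mat_2[unfolded numeral_2_eq_2] algebra_simps)

definition minor2 :: "(nat \<Rightarrow> nat \<Rightarrow> 'a::comm_ring_1) \<Rightarrow> nat \<Rightarrow> nat \<Rightarrow> 'a" where
  "minor2 C a b = C 0 a * C 1 b - C 0 b * C 1 a"

definition minor3 :: "(nat \<Rightarrow> nat \<Rightarrow> 'a::comm_ring_1) \<Rightarrow> nat \<Rightarrow> nat \<Rightarrow> nat \<Rightarrow> 'a" where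
  "minor3 C a b c =
     C 0 a * (C 1 b * C 2 c - C 1 c * C 2 b)
   - C 1 a * (C 0 b * C 2 c - C 0 c * C 2 b)
   + C 2 a * (C 0 b * C 1 c - C 0 c * C 1 b)"

lemma det_mat_3_eq_minor3: "det (mat 3 3 (\<lambda>(i, j). C i (n j))) = minor3 C (n 0) (n 1) (n 2)"
  by (simp add: det_mat_3 minor3_def algebra_simps)

lemma minor3_plucker_right:
  "minor3 C a b d * minor2 C b c = minor3 C a b c * minor2 C b d + minor2 C a b * minor3 C b c d"
  unfolding minor2_def minor3_def by (simp add: algebra_simps)

lemma minor3_plucker_left:
  "minor3 C a c d * minor2 C b c = minor3 C a b c * minor2 C c d + minor2 C a c * minor3 C b c d"
  unfolding minor2_def minor3_def by (simp add: algebra_simps)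

lemma minor3_pos_of_consecutive:
  fixes C :: "nat \<Rightarrow> nat \<Rightarrow> 'a::linordered_idom"
  assumes minor2_pos: "\<And>a b. a < b \<Longrightarrow> minor2 C a b > 0"
    and consecutive: "\<And>k. minor3 C k (Suc k) (Suc (Suc k)) > 0"
  shows "a < b \<Longrightarrow> b < c \<Longrightarrow> minor3 C a b c > 0"
proof (induction "c - a" arbitrary: a b c rule: less_induct)
  case less
  have IH: "minor3 C a' b' c' > 0" if "a' < b'" "b' < c'" "c' - a' < c - a" for a' b' c'
    using less.hyps that by simp
  consider "b = Suc a" "c = Suc b" | "Suc b < c" | "Suc a < b" "c = Suc b"
    using less.prems by linarith
  then show ?case
  proof cases
    case 1
    then show ?thesis using consecutive[of a] by simp
  next
    case 2
    have "minor3 C a b c * minor2 C b (Suc b)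
        = minor3 C a b (Suc b) * minor2 C b c + minor2 C a b * minor3 C b (Suc b) c"
      by (rule minor3_plucker_right)
    also have "\<dots> > 0"
      using IH[of a b "Suc b"] IH[of b "Suc b" c] minor2_pos[of b c] minor2_pos[of a b] less.prems 2
      by (simp add: add_pos_pos)
    finally show ?thesis using minor2_pos[of b "Suc b"] by (simp add: zero_less_mult_iff)
  next
    case 3
    have "minor3 C a b c * minor2 C (Suc a) b
        = minor3 C a (Suc a) b * minor2 C b c + minor2 C a b * minor3 C (Suc a) b c"
      by (rule minor3_plucker_left)
    also have "\<dots> > 0"
      using IH[of a "Suc a" b] IH[of "Suc a" b c] minor2_pos[of b c] minor2_pos[of a b] less.prems 3
      by (simp add: add_pos_pos)
    finally show ?thesis using minor2_pos[of "Suc a" b] 3 by (simp add: zero_less_mult_iff)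
  qed
qed

lemma qpoch_0 [simp]: "qpoch x q 0 = 1"
  by (simp add: qpoch_def)

lemma qpoch_Suc: "qpoch x q (Suc n) = qpoch x q n * (1 - x * q ^ n)"
  by (simp add: qpoch_def)

lemma qpoch_add: "qpoch x q (a + b) = qpoch x q a * qpoch (x * q ^ a) q b"
  by (induction b) (simp_all add: qpoch_Suc power_add mult_ac)

lemma qpoch_factor_pos:
  fixes q x :: real
  assumes "0 \<le> q" "q \<le> 1" "x < 1"
  shows "0 < 1 - x * q ^ j"
proof (cases "x \<le> 0")
  case True
  then show ?thesis using mult_nonpos_nonneg[OF True zero_le_power[OF assms(1), of j]] by linarith
next
  case False
  then have "x * q ^ j \<le> x" using assms by (simp add: mult_left_le power_le_one)
  then show ?thesis using assms by linarith
qed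

lemma qpoch_pos:
  assumes "0 \<le> q" "q \<le> 1" "x < 1"
  shows "0 < qpoch x q n"
  unfolding qpoch_def using qpoch_factor_pos[OF assms] by (simp add: prod_pos)

lemma qpoch_strict_antimono:
  assumes "0 \<le> q" "q \<le> 1" "y < x" "x < 1" "0 < n"
  shows "qpoch x q n < qpoch y q n"
  unfolding qpoch_def
proof (rule prod_mono_strict[of 0])
  show "1 - x * q ^ 0 < 1 - y * q ^ 0" using assms by simp
next
  fix j
  have "y * q ^ j \<le> x * q ^ j" using assms by (simp add: mult_right_mono)
  then show "0 \<le> 1 - x * q ^ j \<and> 1 - x * q ^ j \<le> 1 - y * q ^ j"
    using qpoch_factor_pos[OF assms(1,2,4), of j] by simp
  show "0 < 1 - y * q ^ j" using qpoch_factor_pos[OF assms(1,2), of y j] assms by simp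
qed (use assms in auto)

lemma qpoch_minor2_pos:
  assumes "0 < q" "q \<le> 1" "y < x" "x < 1" "a < b"
  shows "qpoch x q b * qpoch y q a < qpoch x q a * qpoch y q b"
proof -
  obtain c where b: "b = a + c" and "0 < c" using \<open>a < b\<close> less_imp_add_positive by blast
  have "x * q ^ a < 1" using qpoch_factor_pos[of q x a] assms by simp
  moreover have "y * q ^ a < x * q ^ a" using assms by simp
  ultimately have "qpoch (x * q ^ a) q c < qpoch (y * q ^ a) q c"
    using qpoch_strict_antimono \<open>0 < c\<close> assms by simp
  moreover have "0 < qpoch x q a * qpoch y q a" using qpoch_pos assms by simp
  ultimately have "qpoch x q a * qpoch y q a * qpoch (x * q ^ a) q c
                 < qpoch x q a * qpoch y q a * qpoch (y * q ^ a) q c"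
    by (rule mult_strict_left_mono)
  then show ?thesis unfolding b qpoch_add by (simp add: mult_ac)
qed

lemma qpoch_minor3_consecutive:
  "minor3 (\<lambda>i k. qpoch (x i) q k) n (Suc n) (Suc (Suc n)) =
     qpoch (x 0) q n * qpoch (x 1) q n * qpoch (x 2) q n * q ^ (3 * n + 1)
   * ((x 0 - x 1) * (x 0 - x 2) * (x 1 - x 2))"
proof -
  have q_power: "q ^ (3 * n + 1) = q * q ^ n * q ^ n * q ^ n"
    unfolding power_add mult.commute[of 3 n] power_mult power3_eq_cube by simp
  show ?thesis
    unfolding minor3_def qpoch_Suc q_power by (simp add: algebra_simps)
qed

lemma qpoch_minor3_pos:
  assumes "0 < q" "q \<le> 1" "x 2 < x 1" "x 1 < x 0" "x 0 < 1" "a < b" "b < c"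
  shows "0 < minor3 (\<lambda>i k. qpoch (x i) q k) a b c"
proof (rule minor3_pos_of_consecutive)
  show "minor2 (\<lambda>i k. qpoch (x i) q k) a' b' > 0" if "a' < b'" for a' b'
    using qpoch_minor2_pos[of q "x 1" "x 0"] that assms by (simp add: minor2_def)
  show "minor3 (\<lambda>i k. qpoch (x i) q k) k (Suc k) (Suc (Suc k)) > 0" for k
    unfolding qpoch_minor3_consecutive using assms qpoch_pos[of q]
    by (simp add: mult_pos_pos)
qed (use assms in simp_all)

theorem lemma3:
  fixes q :: real and m :: nat and \<mu> :: "nat \<Rightarrow> real" and n :: "nat \<Rightarrow> nat"
  assumes "0 < q" "q < 1"
    and "m \<in> {1, 2, 3}"
    and "0 < \<mu> 0"
    and "\<And>i. i + 1 < m \<Longrightarrow> \<mu> i < \<mu> (i + 1)"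
    and "\<And>j. j + 1 < m \<Longrightarrow> n j < n (j + 1)"
  shows "det (mat m m (\<lambda>(i, j). qpoch (q powr \<mu> i) q (n j))) > 0"
proof -
  define x where "x i = q powr \<mu> i" for i
  have x0: "x 0 < 1" unfolding x_def using powr_less_mono'[of q 0 "\<mu> 0"] assms by simp
  have x_decreasing: "x (Suc i) < x i" if "Suc i < m" for i
    unfolding x_def using powr_less_mono'[of q "\<mu> i" "\<mu> (i + 1)"] assms(1,2,5) that by simp
  have n_increasing: "n i < n (Suc i)" if "Suc i < m" for i
    using assms(6) that by simp
  from assms(3) consider "m = 1" | "m = 2" | "m = 3" by auto
  then show ?thesis
  proof cases
    case 1
    then show ?thesis using qpoch_pos[of q] x0 assms unfolding 1 det_mat_1 by (simp add: x_def)
  next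
    case 2
    then show ?thesis
      using qpoch_minor2_pos[of q "x 1" "x 0"] x_decreasing[of 0] n_increasing[of 0] x0 assms
      by (simp add: det_mat_2 x_def)
  next
    case 3
    then have "0 < minor3 (\<lambda>i k. qpoch (x i) q k) (n 0) (n 1) (n 2)"
      using x_decreasing[of 0] x_decreasing[of 1] n_increasing[of 0] n_increasing[of 1] x0 assms
      by (intro qpoch_minor3_pos) (simp_all add: numeral_2_eq_2)
    then show ?thesis using det_mat_3_eq_minor3[of "\<lambda>i k. qpoch (x i) q k" n] 3 by (simp add: x_def)
  qed
qed

end
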